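(* Let $G=G_1\ast\cdots\ast G_m\ast F_N$ be a countable group ($F_N$ free of finite rank), $\mathcal{F}=\{[G_1],\dots,[G_m]\}$, and $k\ge 1$ an integer. Let $T$ be a small minimal $(G,\mathcal{F})$-tree and $(T_n)_{n\in\mathbb{N}}$ a sequence of $k$-tame $(G,\mathcal{F})$-trees converging to $T$ in the equivariant Gromov–Hausdorff topology. Then $T$ is $k$-tame. (That is, the set of $k$-tame trees is closed in the space of small minimal $(G,\mathcal{F})$-trees.)
   Context: Peripheral: conjugate into some $G_i$. $(G,\mathcal{F})$-tree: $\mathbb{R}$-tree with isometric $G$-action in which every peripheral subgroup fixes a unique point. Small: arc stabilizers trivial or cyclic non-peripheral; minimal: no proper nonempty invariant subtree. $\mathrm{Fix}(g)$ is the fixed point set of $g$. A small minimal $(G,\mathcal{F})$-tree is $k$-tame if for every non-peripheral $g\in G$ and every $l\ge1$, $\mathrm{Fix}(g^l)\subseteq\mathrm{Fix}(g^k)$. Convergence $T_n\to T$ in the equivariant Gromov–Hausdorff topology: for every finite $K\subset T$, finite $P\subset G$, $\epsilon>0$, for all large $n$ there exist finite $K_n\subset T_n$ and $R\subseteq K\times K_n$ with surjective projections such that $|d_T(gx,hy)-d_{T_n}(gx',hy')|<\epsilon$ for all $(x,x'),(y,y')\in R$ and $g,h\in P$. *)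

theory Defs
  imports "HOL-Analysis.Analysis" "HOL-Algebra.Generated_Groups"
begin

definition reduced_word :: "('g, 'z) monoid_scheme \<Rightarrow> nat set \<Rightarrow> (nat \<Rightarrow> 'g set) \<Rightarrow> (nat \<times> 'g) list \<Rightarrow> bool" where
  "reduced_word G J H w \<longleftrightarrow>
     (\<forall>i < length w. fst (w ! i) \<in> J \<and> snd (w ! i) \<in> H (fst (w ! i)) \<and> snd (w ! i) \<noteq> \<one>\<^bsub>G\<^esub>) \<and>
     (\<forall>i. Suc i < length w \<longrightarrow> fst (w ! i) \<noteq> fst (w ! Suc i))"

definition word_prod :: "('g, 'z) monoid_scheme \<Rightarrow> (nat \<times> 'g) list \<Rightarrow> 'g" where
  "word_prod G w = foldr (\<lambda>p acc. snd p \<otimes>\<^bsub>G\<^esub> acc) w \<one>\<^bsub>G\<^esub>"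

definition is_free_product :: "('g, 'z) monoid_scheme \<Rightarrow> nat set \<Rightarrow> (nat \<Rightarrow> 'g set) \<Rightarrow> bool" where
  "is_free_product G J H \<longleftrightarrow> group G \<and> (\<forall>j\<in>J. subgroup (H j) G) \<and>
     bij_betw (word_prod G) {w. reduced_word G J H w} (carrier G)"

text \<open>G = G_0 * ... * G_(m-1) * F_N, where F_N is free on x 0, ..., x (N-1);
  equivalently G is the free product of the G_i and the infinite cyclic groups
  generated by the x j.\<close>

definition free_product_decomp :: "('g, 'z) monoid_scheme \<Rightarrow> (nat \<Rightarrow> 'g set) \<Rightarrow> nat \<Rightarrow> (nat \<Rightarrow> 'g) \<Rightarrow> nat \<Rightarrow> bool" where
  "free_product_decomp G Gs m x N \<longleftrightarrow> group G \<and>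
     (\<forall>j<N. x j \<in> carrier G \<and> (\<forall>n::nat. n > 0 \<longrightarrow> x j [^]\<^bsub>G\<^esub> n \<noteq> \<one>\<^bsub>G\<^esub>)) \<and>
     is_free_product G {..<m + N} (\<lambda>j. if j < m then Gs j else generate G {x (j - m)})"

definition conj_set :: "('g, 'z) monoid_scheme \<Rightarrow> 'g \<Rightarrow> 'g set \<Rightarrow> 'g set" where
  "conj_set G h A = (\<lambda>a. h \<otimes>\<^bsub>G\<^esub> a \<otimes>\<^bsub>G\<^esub> inv\<^bsub>G\<^esub> h) ` A"

definition peripheral_subgroups :: "('g, 'z) monoid_scheme \<Rightarrow> (nat \<Rightarrow> 'g set) \<Rightarrow> nat \<Rightarrow> 'g set set" where
  "peripheral_subgroups G Gs m = {conj_set G h (Gs i) | h i. h \<in> carrier G \<and> i < m}"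

definition peripheral_elem :: "('g, 'z) monoid_scheme \<Rightarrow> (nat \<Rightarrow> 'g set) \<Rightarrow> nat \<Rightarrow> 'g \<Rightarrow> bool" where
  "peripheral_elem G Gs m g \<longleftrightarrow> (\<exists>i<m. \<exists>h\<in>carrier G. h \<otimes>\<^bsub>G\<^esub> g \<otimes>\<^bsub>G\<^esub> inv\<^bsub>G\<^esub> h \<in> Gs i)"

definition peripheral_subgroup :: "('g, 'z) monoid_scheme \<Rightarrow> (nat \<Rightarrow> 'g set) \<Rightarrow> nat \<Rightarrow> 'g set \<Rightarrow> bool" where
  "peripheral_subgroup G Gs m A \<longleftrightarrow> (\<exists>i<m. \<exists>h\<in>carrier G. conj_set G h A \<subseteq> Gs i)"

definition geodesic_seg :: "'a set \<Rightarrow> ('a \<Rightarrow> 'a \<Rightarrow> real) \<Rightarrow> 'a \<Rightarrow> 'a \<Rightarrow> (real \<Rightarrow> 'a) \<Rightarrow> bool" where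
  "geodesic_seg S d x y \<gamma> \<longleftrightarrow> \<gamma> ` {0..d x y} \<subseteq> S \<and> \<gamma> 0 = x \<and> \<gamma> (d x y) = y \<and>
     (\<forall>s\<in>{0..d x y}. \<forall>t\<in>{0..d x y}. d (\<gamma> s) (\<gamma> t) = \<bar>s - t\<bar>)"

definition R_tree :: "'a set \<Rightarrow> ('a \<Rightarrow> 'a \<Rightarrow> real) \<Rightarrow> bool" where
  "R_tree S d \<longleftrightarrow> S \<noteq> {} \<and> Metric_space S d \<and>
     (\<forall>x\<in>S. \<forall>y\<in>S. \<exists>\<gamma>. geodesic_seg S d x y \<gamma> \<and>
        (\<forall>p. continuous_map (top_of_set {0..1::real}) (Metric_space.mtopology S d) p \<and>
             inj_on p {0..1} \<and> p 0 = x \<and> p 1 = y \<longrightarrow> p ` {0..1} = \<gamma> ` {0..d x y}))"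

text \<open>The segment [x,y] in an R-tree (the image of the unique arc).\<close>
definition segment :: "'a set \<Rightarrow> ('a \<Rightarrow> 'a \<Rightarrow> real) \<Rightarrow> 'a \<Rightarrow> 'a \<Rightarrow> 'a set" where
  "segment S d x y = {z \<in> S. d x z + d z y = d x y}"

definition isometric_action :: "('g, 'z) monoid_scheme \<Rightarrow> 'a set \<Rightarrow> ('a \<Rightarrow> 'a \<Rightarrow> real) \<Rightarrow> ('g \<Rightarrow> 'a \<Rightarrow> 'a) \<Rightarrow> bool" where
  "isometric_action G S d act \<longleftrightarrow>
     (\<forall>g\<in>carrier G. \<forall>x\<in>S. act g x \<in> S) \<and>
     (\<forall>x\<in>S. act \<one>\<^bsub>G\<^esub> x = x) \<and>
     (\<forall>g\<in>carrier G. \<forall>h\<in>carrier G. \<forall>x\<in>S. act (g \<otimes>\<^bsub>G\<^esub> h) x = act g (act h x)) \<and>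
     (\<forall>g\<in>carrier G. \<forall>x\<in>S. \<forall>y\<in>S. d (act g x) (act g y) = d x y)"

definition Fix :: "'a set \<Rightarrow> ('g \<Rightarrow> 'a \<Rightarrow> 'a) \<Rightarrow> 'g \<Rightarrow> 'a set" where
  "Fix S act g = {x \<in> S. act g x = x}"

definition GF_tree :: "('g, 'z) monoid_scheme \<Rightarrow> (nat \<Rightarrow> 'g set) \<Rightarrow> nat \<Rightarrow> 'a set \<Rightarrow> ('a \<Rightarrow> 'a \<Rightarrow> real) \<Rightarrow> ('g \<Rightarrow> 'a \<Rightarrow> 'a) \<Rightarrow> bool" where
  "GF_tree G Gs m S d act \<longleftrightarrow> R_tree S d \<and> isometric_action G S d act \<and>
     (\<forall>P\<in>peripheral_subgroups G Gs m. \<exists>!x. x \<in> S \<and> (\<forall>g\<in>P. act g x = x))"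

definition arc_stab :: "('g, 'z) monoid_scheme \<Rightarrow> 'a set \<Rightarrow> ('a \<Rightarrow> 'a \<Rightarrow> real) \<Rightarrow> ('g \<Rightarrow> 'a \<Rightarrow> 'a) \<Rightarrow> 'a \<Rightarrow> 'a \<Rightarrow> 'g set" where
  "arc_stab G S d act x y = {g \<in> carrier G. \<forall>z\<in>segment S d x y. act g z = z}"

definition small_tree :: "('g, 'z) monoid_scheme \<Rightarrow> (nat \<Rightarrow> 'g set) \<Rightarrow> nat \<Rightarrow> 'a set \<Rightarrow> ('a \<Rightarrow> 'a \<Rightarrow> real) \<Rightarrow> ('g \<Rightarrow> 'a \<Rightarrow> 'a) \<Rightarrow> bool" where
  "small_tree G Gs m S d act \<longleftrightarrow>
     (\<forall>x\<in>S. \<forall>y\<in>S. x \<noteq> y \<longrightarrow>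
        (let A = arc_stab G S d act x y in
           A = {\<one>\<^bsub>G\<^esub>} \<or>
           ((\<exists>c\<in>carrier G. A = generate G {c}) \<and> \<not> peripheral_subgroup G Gs m A)))"

definition subtree :: "'a set \<Rightarrow> ('a \<Rightarrow> 'a \<Rightarrow> real) \<Rightarrow> 'a set \<Rightarrow> bool" where
  "subtree S d Y \<longleftrightarrow> Y \<noteq> {} \<and> Y \<subseteq> S \<and> (\<forall>x\<in>Y. \<forall>y\<in>Y. segment S d x y \<subseteq> Y)"

definition minimal_tree :: "('g, 'z) monoid_scheme \<Rightarrow> 'a set \<Rightarrow> ('a \<Rightarrow> 'a \<Rightarrow> real) \<Rightarrow> ('g \<Rightarrow> 'a \<Rightarrow> 'a) \<Rightarrow> bool" where
  "minimal_tree G S d act \<longleftrightarrow>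
     (\<forall>Y. subtree S d Y \<and> (\<forall>g\<in>carrier G. act g ` Y \<subseteq> Y) \<longrightarrow> Y = S)"

definition small_minimal_GF_tree :: "('g, 'z) monoid_scheme \<Rightarrow> (nat \<Rightarrow> 'g set) \<Rightarrow> nat \<Rightarrow> 'a set \<Rightarrow> ('a \<Rightarrow> 'a \<Rightarrow> real) \<Rightarrow> ('g \<Rightarrow> 'a \<Rightarrow> 'a) \<Rightarrow> bool" where
  "small_minimal_GF_tree G Gs m S d act \<longleftrightarrow>
     GF_tree G Gs m S d act \<and> small_tree G Gs m S d act \<and> minimal_tree G S d act"

definition k_tame :: "('g, 'z) monoid_scheme \<Rightarrow> (nat \<Rightarrow> 'g set) \<Rightarrow> nat \<Rightarrow> nat \<Rightarrow> 'a set \<Rightarrow> ('a \<Rightarrow> 'a \<Rightarrow> real) \<Rightarrow> ('g \<Rightarrow> 'a \<Rightarrow> 'a) \<Rightarrow> bool" where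
  "k_tame G Gs m k S d act \<longleftrightarrow> small_minimal_GF_tree G Gs m S d act \<and>
     (\<forall>g\<in>carrier G. \<not> peripheral_elem G Gs m g \<longrightarrow>
        (\<forall>l::nat. l \<ge> 1 \<longrightarrow> Fix S act (g [^]\<^bsub>G\<^esub> l) \<subseteq> Fix S act (g [^]\<^bsub>G\<^esub> k)))"

definition eGH_converges :: "('g, 'z) monoid_scheme \<Rightarrow> (nat \<Rightarrow> 'b set) \<Rightarrow> (nat \<Rightarrow> 'b \<Rightarrow> 'b \<Rightarrow> real) \<Rightarrow> (nat \<Rightarrow> 'g \<Rightarrow> 'b \<Rightarrow> 'b) \<Rightarrow> 'a set \<Rightarrow> ('a \<Rightarrow> 'a \<Rightarrow> real) \<Rightarrow> ('g \<Rightarrow> 'a \<Rightarrow> 'a) \<Rightarrow> bool" where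
  "eGH_converges G Sn dn actn S d act \<longleftrightarrow>
     (\<forall>K P \<epsilon>. finite K \<and> K \<subseteq> S \<and> finite P \<and> P \<subseteq> carrier G \<and> \<epsilon> > 0 \<longrightarrow>
        (\<exists>n0. \<forall>n\<ge>n0. \<exists>Kn R. finite Kn \<and> Kn \<subseteq> Sn n \<and> R \<subseteq> K \<times> Kn \<and> fst ` R = K \<and> snd ` R = Kn \<and>
           (\<forall>(x, x')\<in>R. \<forall>(y, y')\<in>R. \<forall>g\<in>P. \<forall>h\<in>P.
              \<bar>d (act g x) (act h y) - dn n (actn n g x') (actn n h y')\<bar> < \<epsilon>)))"

end

theory Submission
  imports Defs
begin

text \<open>Let \<open>g\<close> be non-peripheral, \<open>l \<ge> 1\<close>, and \<open>p\<close> a point of \<open>T\<close> fixed by \<open>g\<^sup>l\<close>. In every \<open>k\<close>-tame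
  tree, \<open>d(q, g\<^sup>k q) \<le> k d(q, g\<^sup>l q)\<close> for all points \<open>q\<close>; approximating \<open>p\<close> by points \<open>q\<close> of \<open>T\<^sub>n\<close>
  with \<open>d(q, g\<^sup>l q) < \<epsilon>\<close> then gives \<open>d(p, g\<^sup>k p) \<le> (k + 1) \<epsilon>\<close> for every \<open>\<epsilon> > 0\<close>, so \<open>g\<^sup>k\<close> fixes \<open>p\<close>.

  The displacement bound comes from the elliptic/hyperbolic dichotomy for an isometry \<open>w\<close> of an
  \<open>\<real>\<close>-tree, derived here from the four-point condition: either \<open>w\<close> fixes the midpoint of
  \<open>[y, w y]\<close>, or \<open>n \<mapsto> d(y, w\<^sup>n y)\<close> is affine with positive slope.\<close>

section \<open>Arcs and segments in \<real>-trees\<close>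

lemma lipschitz_path_continuous_map:
  assumes M: "Metric_space S d" and inS: "p ` A \<subseteq> S"
    and lip: "\<And>s t. s \<in> A \<Longrightarrow> t \<in> A \<Longrightarrow> d (p s) (p t) \<le> C * \<bar>s - t\<bar>"
  shows "continuous_map (top_of_set A) (Metric_space.mtopology S d) p"
proof -
  interpret M: Metric_space S d by (rule M)
  show ?thesis unfolding M.continuous_map_to_metric
  proof (intro ballI allI impI)
    fix x e assume x: "x \<in> topspace (top_of_set A)" and e: "(e::real) > 0"
    let ?U = "A \<inter> ball x (e / (\<bar>C\<bar> + 1))"
    have "p y \<in> M.mball (p x) e" if y: "y \<in> ?U" for y
    proof -
      have "\<bar>x - y\<bar> < e / (\<bar>C\<bar> + 1)" using y by (auto simp: dist_real_def)
      then have "(\<bar>C\<bar> + 1) * \<bar>x - y\<bar> < e" by (simp add: pos_less_divide_eq mult.commute)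
      moreover have "C * \<bar>x - y\<bar> \<le> (\<bar>C\<bar> + 1) * \<bar>x - y\<bar>" by (intro mult_right_mono) auto
      moreover have "d (p x) (p y) \<le> C * \<bar>x - y\<bar>" using lip x y by auto
      ultimately show ?thesis using inS x y by auto
    qed
    moreover have "openin (top_of_set A) ?U" by (rule openin_open_Int) simp
    moreover have "x \<in> ?U" using x e by auto
    ultimately show "\<exists>U. openin (top_of_set A) U \<and> x \<in> U \<and> (\<forall>y\<in>U. p y \<in> M.mball (p x) e)"
      by blast
  qed
qed

lemma lipschitz_arc_image_eq:
  assumes M: "Metric_space S d" and L: "L > 0" and inS: "q ` {0..L} \<subseteq> S"
    and inj: "inj_on q {0..L}"
    and lip: "\<And>s t. s \<in> {0..L} \<Longrightarrow> t \<in> {0..L} \<Longrightarrow> d (q s) (q t) \<le> C * \<bar>s - t\<bar>"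
    and q0: "q 0 = x" and qL: "q L = y"
    and unique: "\<forall>p. continuous_map (top_of_set {0..1::real}) (Metric_space.mtopology S d) p \<and>
             inj_on p {0..1} \<and> p 0 = x \<and> p 1 = y \<longrightarrow> p ` {0..1} = \<Gamma>"
  shows "q ` {0..L} = \<Gamma>"
proof -
  define p where "p = q \<circ> (\<lambda>t. L * t)"
  have scale: "(\<lambda>t. L * t) ` {0..1} = {0..L}"
  proof
    show "(\<lambda>t. L * t) ` {0..1} \<subseteq> {0..L}" using L by (auto intro: mult_left_le)
    show "{0..L} \<subseteq> (\<lambda>t. L * t) ` {0..1}"
    proof
      fix z assume "z \<in> {0..L}"
      then have "z = L * (z / L)" "z / L \<in> {0..1}" using L by auto
      then show "z \<in> (\<lambda>t. L * t) ` {0..1}" by blast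
    qed
  qed
  then have mem: "\<And>t. t \<in> {0..1} \<Longrightarrow> L * t \<in> {0..L}" by blast
  have img: "p ` {0..1} = q ` {0..L}" unfolding p_def image_comp[symmetric] scale ..
  have "continuous_map (top_of_set {0..1}) (Metric_space.mtopology S d) p"
  proof (rule lipschitz_path_continuous_map[OF M, where C = "C * L"])
    show "p ` {0..1} \<subseteq> S" using inS unfolding img .
    fix s t :: real assume s: "s \<in> {0..1}" and t: "t \<in> {0..1}"
    have "\<bar>L * s - L * t\<bar> = L * \<bar>s - t\<bar>"
      using L by (simp add: abs_mult right_diff_distrib[symmetric])
    then show "d (p s) (p t) \<le> C * L * \<bar>s - t\<bar>"
      using lip[OF mem[OF s] mem[OF t]] by (simp add: p_def mult.assoc)
  qed
  moreover have "inj_on p {0..1}"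
  proof (rule inj_onI)
    fix s t assume "s \<in> {0..1}" "t \<in> {0..1}" "p s = p t"
    then have "L * s = L * t" using inj_onD[OF inj _ mem mem] by (simp add: p_def)
    then show "s = t" using L by simp
  qed
  moreover have "p 0 = x" "p 1 = y" using q0 qL by (simp_all add: p_def)
  ultimately have "p ` {0..1} = \<Gamma>" using unique by blast
  then show ?thesis using img by simp
qed

definition isometric_path :: "'a set \<Rightarrow> ('a \<Rightarrow> 'a \<Rightarrow> real) \<Rightarrow> real \<Rightarrow> (real \<Rightarrow> 'a) \<Rightarrow> bool" where
  "isometric_path S d L \<gamma> \<longleftrightarrow> \<gamma> ` {0..L} \<subseteq> S \<and> (\<forall>s\<in>{0..L}. \<forall>t\<in>{0..L}. d (\<gamma> s) (\<gamma> t) = \<bar>s - t\<bar>)"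

lemma geodesic_seg_iff_isometric_path:
  "geodesic_seg S d x y \<gamma> \<longleftrightarrow> isometric_path S d (d x y) \<gamma> \<and> \<gamma> 0 = x \<and> \<gamma> (d x y) = y"
  by (auto simp: geodesic_seg_def isometric_path_def)

lemma isometric_path_reverse:
  "isometric_path S d L \<gamma> \<Longrightarrow> isometric_path S d L (\<lambda>t. \<gamma> (L - t))"
  unfolding isometric_path_def by (auto simp: abs_minus_commute)

lemma isometric_path_shift:
  assumes \<gamma>: "isometric_path S d L \<gamma>" and "0 \<le> a"
  shows "isometric_path S d (L - a) (\<lambda>t. \<gamma> (a + t))"
proof -
  have shifted: "a + t \<in> {0..L}" if "t \<in> {0..L - a}" for t using that \<open>0 \<le> a\<close> by simp
  show ?thesis
    unfolding isometric_path_def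
  proof (intro conjI ballI image_subsetI)
    fix s t assume "s \<in> {0..L - a}" "t \<in> {0..L - a}"
    then show "d (\<gamma> (a + s)) (\<gamma> (a + t)) = \<bar>s - t\<bar>"
      using \<gamma> shifted unfolding isometric_path_def by auto
  next
    fix t assume "t \<in> {0..L - a}"
    then show "\<gamma> (a + t) \<in> S" using \<gamma> shifted unfolding isometric_path_def by blast
  qed
qed

lemma isometric_path_restrict:
  "isometric_path S d L \<gamma> \<Longrightarrow> L' \<le> L \<Longrightarrow> isometric_path S d L' \<gamma>"
  unfolding isometric_path_def by fastforce

lemma isometric_path_in:
  "isometric_path S d L \<gamma> \<Longrightarrow> t \<in> {0..L} \<Longrightarrow> \<gamma> t \<in> S"
  unfolding isometric_path_def by blast

definition path_join :: "real \<Rightarrow> (real \<Rightarrow> 'a) \<Rightarrow> (real \<Rightarrow> 'a) \<Rightarrow> real \<Rightarrow> 'a" where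
  "path_join a \<gamma>1 \<gamma>2 t = (if t \<le> a then \<gamma>1 t else \<gamma>2 (t - a))"

lemma path_join_endpoints:
  assumes "0 \<le> a" "0 \<le> b" "\<gamma>1 a = \<gamma>2 0"
  shows "path_join a \<gamma>1 \<gamma>2 0 = \<gamma>1 0" "path_join a \<gamma>1 \<gamma>2 (a + b) = \<gamma>2 b"
  using assms by (auto simp: path_join_def)

lemma path_join_isometric_pieces:
  assumes M: "Metric_space S d" and \<gamma>1: "isometric_path S d a \<gamma>1" and \<gamma>2: "isometric_path S d b \<gamma>2"
    and "0 \<le> a" and junction: "\<gamma>1 a = \<gamma>2 0"
  shows "path_join a \<gamma>1 \<gamma>2 ` {0..a + b} \<subseteq> S"
    and "\<And>s t. s \<in> {0..a + b} \<Longrightarrow> t \<in> {0..a + b} \<Longrightarrow>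
           d (path_join a \<gamma>1 \<gamma>2 s) (path_join a \<gamma>1 \<gamma>2 t) \<le> 1 * \<bar>s - t\<bar>"
proof -
  interpret M: Metric_space S d by (rule M)
  let ?q = "path_join a \<gamma>1 \<gamma>2"
  have in1: "s \<le> a \<Longrightarrow> s \<in> {0..a + b} \<Longrightarrow> s \<in> {0..a}" for s by simp
  have in2: "\<not> s \<le> a \<Longrightarrow> s \<in> {0..a + b} \<Longrightarrow> s - a \<in> {0..b}" for s by simp
  show "?q ` {0..a + b} \<subseteq> S"
    using isometric_path_in[OF \<gamma>1 in1] isometric_path_in[OF \<gamma>2 in2] by (auto simp: path_join_def)
  have across: "d (?q s) (?q t) \<le> \<bar>s - t\<bar>"
    if s: "s \<in> {0..a + b}" "s \<le> a" and t: "t \<in> {0..a + b}" "\<not> t \<le> a" for s t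
  proof -
    have a: "a \<in> {0..a}" and o: "0 \<in> {0..b}" using \<open>0 \<le> a\<close> t by auto
    have s': "s \<in> {0..a}" and t': "t - a \<in> {0..b}" using in1 in2 s t by blast+
    have "d (\<gamma>1 s) (\<gamma>2 (t - a)) \<le> d (\<gamma>1 s) (\<gamma>1 a) + d (\<gamma>1 a) (\<gamma>2 (t - a))"
      using isometric_path_in[OF \<gamma>1 s'] isometric_path_in[OF \<gamma>1 a] isometric_path_in[OF \<gamma>2 t']
      by (rule M.triangle)
    also have "\<dots> = (a - s) + (t - a)"
    proof -
      have "d (\<gamma>1 s) (\<gamma>1 a) = \<bar>s - a\<bar>" using \<gamma>1 s' a unfolding isometric_path_def by blast
      moreover have "d (\<gamma>2 0) (\<gamma>2 (t - a)) = \<bar>0 - (t - a)\<bar>"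
        using \<gamma>2 o t' unfolding isometric_path_def by blast
      ultimately show ?thesis using s' t' junction by simp
    qed
    also have "\<dots> = \<bar>s - t\<bar>" using s t by simp
    finally show ?thesis using s t by (simp add: path_join_def)
  qed
  fix s t assume s: "s \<in> {0..a + b}" and t: "t \<in> {0..a + b}"
  consider "s \<le> a" "t \<le> a" | "s \<le> a" "\<not> t \<le> a" | "\<not> s \<le> a" "t \<le> a" | "\<not> s \<le> a" "\<not> t \<le> a"
    by blast
  then show "d (?q s) (?q t) \<le> 1 * \<bar>s - t\<bar>"
  proof cases
    case 1
    then have "s \<in> {0..a}" "t \<in> {0..a}" using in1 s t by blast+
    then have "d (\<gamma>1 s) (\<gamma>1 t) = \<bar>s - t\<bar>" using \<gamma>1 unfolding isometric_path_def by blast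
    then show ?thesis using 1 by (simp add: path_join_def)
  next
    case 2 then show ?thesis using across s t by simp
  next
    case 3
    have "d (?q s) (?q t) = d (?q t) (?q s)" by (rule M.commute)
    then show ?thesis using across[OF t _ s] 3 by (simp add: abs_minus_commute)
  next
    case 4
    then have "s - a \<in> {0..b}" "t - a \<in> {0..b}" using in2 s t by blast+
    then have "d (\<gamma>2 (s - a)) (\<gamma>2 (t - a)) = \<bar>s - t\<bar>"
      using \<gamma>2 unfolding isometric_path_def by (metis diff_diff_eq2 diff_add_cancel)
    then show ?thesis using 4 by (simp add: path_join_def)
  qed
qed

lemma geodesic_seg_dist:
  assumes "geodesic_seg S d x y \<gamma>" and "t \<in> {0..d x y}"
  shows "\<gamma> t \<in> S" "d x (\<gamma> t) = t" "d (\<gamma> t) y = d x y - t"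
proof -
  have ends: "0 \<in> {0..d x y}" "d x y \<in> {0..d x y}" using assms(2) by auto
  have iso: "\<And>s. s \<in> {0..d x y} \<Longrightarrow> d (\<gamma> s) (\<gamma> t) = \<bar>s - t\<bar>"
    using assms unfolding geodesic_seg_def by blast
  show "\<gamma> t \<in> S" using assms unfolding geodesic_seg_def by blast
  show "d x (\<gamma> t) = t" using iso[OF ends(1)] assms by (simp add: geodesic_seg_def)
  have "d (\<gamma> t) (\<gamma> (d x y)) = \<bar>t - d x y\<bar>"
    using assms ends(2) unfolding geodesic_seg_def by blast
  then show "d (\<gamma> t) y = d x y - t" using assms by (simp add: geodesic_seg_def)
qed

lemma geodesic_seg_image_subset_segment:
  "geodesic_seg S d x y \<gamma> \<Longrightarrow> \<gamma> ` {0..d x y} \<subseteq> segment S d x y"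
  using geodesic_seg_dist by (fastforce simp: segment_def)

lemma R_tree_unique_arc:
  assumes "R_tree S d" and "x \<in> S" and "y \<in> S"
  obtains \<gamma> where "geodesic_seg S d x y \<gamma>"
    "\<forall>p. continuous_map (top_of_set {0..1::real}) (Metric_space.mtopology S d) p \<and>
             inj_on p {0..1} \<and> p 0 = x \<and> p 1 = y \<longrightarrow> p ` {0..1} = \<gamma> ` {0..d x y}"
  using assms unfolding R_tree_def by blast

lemma R_tree_geodesic:
  assumes "R_tree S d" and "x \<in> S" and "y \<in> S"
  obtains \<gamma> where "geodesic_seg S d x y \<gamma>"
proof -
  obtain \<gamma> where \<gamma>: "geodesic_seg S d x y \<gamma>"
    and "\<forall>p. continuous_map (top_of_set {0..1::real}) (Metric_space.mtopology S d) p \<and>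
             inj_on p {0..1} \<and> p 0 = x \<and> p 1 = y \<longrightarrow> p ` {0..1} = \<gamma> ` {0..d x y}"
    by (rule R_tree_unique_arc[OF assms])
  show thesis by (rule that[OF \<gamma>])
qed

text \<open>Every point \<open>z\<close> of the segment lies on the arc, because the geodesics \<open>[x,z]\<close> and \<open>[z,y]\<close>
  concatenate to an injective path from \<open>x\<close> to \<open>y\<close>: along it the distance from \<open>x\<close> equals the
  parameter.\<close>

lemma R_tree_segment_arc:
  assumes R: "R_tree S d" and x: "x \<in> S" and y: "y \<in> S"
  obtains \<gamma> where "geodesic_seg S d x y \<gamma>" "\<gamma> ` {0..d x y} = segment S d x y"
    "\<forall>p. continuous_map (top_of_set {0..1::real}) (Metric_space.mtopology S d) p \<and>
             inj_on p {0..1} \<and> p 0 = x \<and> p 1 = y \<longrightarrow> p ` {0..1} = segment S d x y"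
proof -
  have M: "Metric_space S d" using R by (simp add: R_tree_def)
  interpret M: Metric_space S d by (rule M)
  obtain \<gamma> where \<gamma>: "geodesic_seg S d x y \<gamma>" and unique:
    "\<forall>p. continuous_map (top_of_set {0..1::real}) M.mtopology p \<and>
             inj_on p {0..1} \<and> p 0 = x \<and> p 1 = y \<longrightarrow> p ` {0..1} = \<gamma> ` {0..d x y}"
    by (rule R_tree_unique_arc[OF R x y])
  have "segment S d x y \<subseteq> \<gamma> ` {0..d x y}"
  proof
    fix z assume "z \<in> segment S d x y"
    then have z: "z \<in> S" and zd: "d x z + d z y = d x y" by (auto simp: segment_def)
    show "z \<in> \<gamma> ` {0..d x y}"
    proof (cases "x = y")
      case True
      then have "d x z + d z x = 0" using zd x by simp
      then have "d x z = 0" using M.nonneg[of x z] M.nonneg[of z x] by linarith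
      then have "z = x" using M.zero[OF x z] by simp
      moreover have "\<gamma> 0 = x" "0 \<in> {0..d x y}" using \<gamma> by (simp_all add: geodesic_seg_def)
      ultimately show ?thesis by (metis imageI)
    next
      case False
      obtain \<gamma>1 where \<gamma>1: "geodesic_seg S d x z \<gamma>1" by (rule R_tree_geodesic[OF R x z])
      obtain \<gamma>2 where \<gamma>2: "geodesic_seg S d z y \<gamma>2" by (rule R_tree_geodesic[OF R z y])
      define a where "a = d x z"
      define b where "b = d z y"
      define q where "q = path_join a \<gamma>1 \<gamma>2"
      have a0: "0 \<le> a" and b0: "0 \<le> b" by (simp_all add: a_def b_def)
      have ab: "a + b = d x y" using zd by (simp add: a_def b_def)
      have iso1: "isometric_path S d a \<gamma>1" and iso2: "isometric_path S d b \<gamma>2"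
        and ends: "\<gamma>1 0 = x" "\<gamma>1 a = z" "\<gamma>2 0 = z" "\<gamma>2 b = y"
        using \<gamma>1 \<gamma>2 unfolding geodesic_seg_iff_isometric_path a_def b_def by blast+
      have junction: "\<gamma>1 a = \<gamma>2 0" using ends by simp
      have q0: "q 0 = x" and qab: "q (a + b) = y"
        using path_join_endpoints[of a b \<gamma>1 \<gamma>2, OF a0 b0 junction] ends by (simp_all add: q_def)
      have dist_x: "d x (q t) = t" if t: "t \<in> {0..a + b}" for t
      proof (cases "t \<le> a")
        case True then show ?thesis using geodesic_seg_dist(2)[OF \<gamma>1] t by (simp add: q_def path_join_def a_def)
      next
        case False
        then have s: "t - a \<in> {0..d z y}" using t by (simp add: b_def)
        note on2 = geodesic_seg_dist[OF \<gamma>2 s]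
        have "d x (\<gamma>2 (t - a)) \<le> d x z + d z (\<gamma>2 (t - a))" using M.triangle x z on2(1) .
        moreover have "d x y \<le> d x (\<gamma>2 (t - a)) + d (\<gamma>2 (t - a)) y" using M.triangle x on2(1) y .
        ultimately show ?thesis using False on2 ab by (simp add: q_def path_join_def a_def b_def)
      qed
      have pieces: "q ` {0..a + b} \<subseteq> S"
        "\<And>s t. s \<in> {0..a + b} \<Longrightarrow> t \<in> {0..a + b} \<Longrightarrow> d (q s) (q t) \<le> 1 * \<bar>s - t\<bar>"
        unfolding q_def by (rule path_join_isometric_pieces[OF M iso1 iso2 a0 junction])+
      have inj: "inj_on q {0..a + b}"
      proof (rule inj_onI)
        fix s t assume s: "s \<in> {0..a + b}" and t: "t \<in> {0..a + b}" and "q s = q t"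
        then have "d x (q s) = d x (q t)" by simp
        then show "s = t" unfolding dist_x[OF s] dist_x[OF t] .
      qed
      have pos: "a + b > 0"
        using False ab M.zero[OF x y] M.nonneg[of x y] by (simp add: less_le)
      have "q ` {0..a + b} = \<gamma> ` {0..d x y}"
        by (rule lipschitz_arc_image_eq[OF M pos pieces(1) inj pieces(2) q0 qab unique])
      moreover have "q a = z" using ends by (simp add: q_def path_join_def)
      moreover have "a \<in> {0..a + b}" using a0 b0 by simp
      ultimately show ?thesis by (metis imageI)
    qed
  qed
  then have "\<gamma> ` {0..d x y} = segment S d x y"
    using geodesic_seg_image_subset_segment[OF \<gamma>] by blast
  with \<gamma> unique show thesis by (intro that) simp_all
qed

lemma R_tree_arc_image_eq_segment:
  assumes R: "R_tree S d" and x: "x \<in> S" and y: "y \<in> S" and L: "L > 0"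
    and inS: "q ` {0..L} \<subseteq> S" and inj: "inj_on q {0..L}"
    and lip: "\<And>s t. s \<in> {0..L} \<Longrightarrow> t \<in> {0..L} \<Longrightarrow> d (q s) (q t) \<le> C * \<bar>s - t\<bar>"
    and q0: "q 0 = x" and qL: "q L = y"
  shows "q ` {0..L} = segment S d x y"
proof -
  have M: "Metric_space S d" using R by (simp add: R_tree_def)
  obtain \<gamma> where "geodesic_seg S d x y \<gamma>" "\<gamma> ` {0..d x y} = segment S d x y"
    and unique: "\<forall>p. continuous_map (top_of_set {0..1::real}) (Metric_space.mtopology S d) p \<and>
             inj_on p {0..1} \<and> p 0 = x \<and> p 1 = y \<longrightarrow> p ` {0..1} = segment S d x y"
    by (rule R_tree_segment_arc[OF R x y])
  show ?thesis by (rule lipschitz_arc_image_eq[OF M L inS inj lip q0 qL unique])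
qed

lemma R_tree_geodesic_onto_segment:
  assumes "R_tree S d" and "x \<in> S" and "y \<in> S"
  obtains \<gamma> where "geodesic_seg S d x y \<gamma>" "\<gamma> ` {0..d x y} = segment S d x y"
proof -
  obtain \<gamma> where \<gamma>: "geodesic_seg S d x y \<gamma>" "\<gamma> ` {0..d x y} = segment S d x y"
    and "\<forall>p. continuous_map (top_of_set {0..1::real}) (Metric_space.mtopology S d) p \<and>
             inj_on p {0..1} \<and> p 0 = x \<and> p 1 = y \<longrightarrow> p ` {0..1} = segment S d x y"
    by (rule R_tree_segment_arc[OF assms])
  show thesis by (rule that[OF \<gamma>])
qed

section \<open>Tripods and the four-point condition\<close>

lemma segment_point_at_dist:
  assumes "R_tree S d" and "x \<in> S" and "y \<in> S" and "0 \<le> t" and "t \<le> d x y"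
  obtains p where "p \<in> segment S d x y" "d x p = t"
proof -
  obtain \<gamma> where \<gamma>: "geodesic_seg S d x y \<gamma>" "\<gamma> ` {0..d x y} = segment S d x y"
    by (rule R_tree_geodesic_onto_segment[OF assms(1-3)])
  have "t \<in> {0..d x y}" using assms(4,5) by simp
  then show thesis using that[of "\<gamma> t"] geodesic_seg_dist(2)[OF \<gamma>(1)] \<gamma>(2) by blast
qed

lemma segment_point_unique:
  assumes "R_tree S d" and "x \<in> S" and "y \<in> S"
    and "p \<in> segment S d x y" and "q \<in> segment S d x y" and "d x p = d x q"
  shows "p = q"
proof -
  obtain \<gamma> where \<gamma>: "geodesic_seg S d x y \<gamma>" "\<gamma> ` {0..d x y} = segment S d x y"
    by (rule R_tree_geodesic_onto_segment[OF assms(1-3)])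
  obtain s t where st: "s \<in> {0..d x y}" "t \<in> {0..d x y}" and "p = \<gamma> s" "q = \<gamma> t"
    using assms(4,5) unfolding \<gamma>(2)[symmetric] by blast
  moreover have "s = t"
    using geodesic_seg_dist(2)[OF \<gamma>(1) st(1)] geodesic_seg_dist(2)[OF \<gamma>(1) st(2)] assms(6) calculation
    by simp
  ultimately show ?thesis by simp
qed

lemma segment_trans:
  assumes "Metric_space S d" and "w \<in> S" and "y \<in> S"
    and "c \<in> segment S d w y" and "p \<in> segment S d w c"
  shows "p \<in> segment S d w y"
proof -
  interpret M: Metric_space S d by (rule assms(1))
  have c: "c \<in> S" "d w c + d c y = d w y" and p: "p \<in> S" "d w p + d p c = d w c"
    using assms(4,5) by (auto simp: segment_def)
  have "d p y \<le> d p c + d c y" and "d w y \<le> d w p + d p y"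
    using M.triangle p c assms(2,3) by blast+
  then show ?thesis using c p by (auto simp: segment_def)
qed

text \<open>The geodesics from \<open>x\<close> to \<open>y\<close> and to \<open>z\<close> agree up to the last parameter \<open>t\<^sub>0\<close> where they meet;
  the branch point \<open>c\<close> reached at \<open>t\<^sub>0\<close> lies on \<open>[y,z]\<close> because going back from \<open>y\<close> to \<open>c\<close> and
  then out to \<open>z\<close> is an injective path.\<close>

lemma R_tree_tripod:
  assumes R: "R_tree S d" and x: "x \<in> S" and y: "y \<in> S" and z: "z \<in> S"
  obtains c where "c \<in> segment S d x y" "c \<in> segment S d x z" "c \<in> segment S d y z"
proof (cases "y = z")
  case True
  have "d y y = 0" using R y Metric_space.zero[of S d y y] by (simp add: R_tree_def)
  then show thesis using that[of y] True x y by (simp add: segment_def)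
next
  case False
  have M: "Metric_space S d" using R by (simp add: R_tree_def)
  interpret M: Metric_space S d by (rule M)
  obtain \<gamma> where \<gamma>: "geodesic_seg S d x y \<gamma>" and \<gamma>_img: "\<gamma> ` {0..d x y} = segment S d x y"
    by (rule R_tree_geodesic_onto_segment[OF R x y])
  obtain \<eta> where \<eta>: "geodesic_seg S d x z \<eta>" and \<eta>_img: "\<eta> ` {0..d x z} = segment S d x z"
    by (rule R_tree_geodesic_onto_segment[OF R x z])
  define D1 where "D1 = d x y"
  define D2 where "D2 = d x z"
  have iso_\<gamma>: "isometric_path S d D1 \<gamma>" and iso_\<eta>: "isometric_path S d D2 \<eta>"
    and ends: "\<gamma> 0 = x" "\<gamma> D1 = y" "\<eta> 0 = x" "\<eta> D2 = z"
    using \<gamma> \<eta> unfolding geodesic_seg_iff_isometric_path D1_def D2_def by blast+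
  have dist_\<gamma>: "\<And>t. t \<in> {0..D1} \<Longrightarrow> d x (\<gamma> t) = t"
    and dist_\<eta>: "\<And>t. t \<in> {0..D2} \<Longrightarrow> d x (\<eta> t) = t"
    using geodesic_seg_dist(2)[OF \<gamma>] geodesic_seg_dist(2)[OF \<eta>] by (simp_all add: D1_def D2_def)
  define A where "A = {t. 0 \<le> t \<and> t \<le> D1 \<and> t \<le> D2 \<and> \<gamma> t = \<eta> t}"
  define t0 where "t0 = Sup A"
  have "0 \<in> A" using ends by (simp add: A_def D1_def D2_def)
  moreover have bdd: "bdd_above A" by (rule bdd_aboveI[where M = D1]) (simp add: A_def)
  ultimately have t0_ge: "0 \<le> t0" and t0_le: "t0 \<le> D1" "t0 \<le> D2"
    and upper: "\<And>t. t \<in> A \<Longrightarrow> t \<le> t0"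
    unfolding t0_def by (auto intro: cSup_upper cSup_least simp: A_def)
  have t0_in: "t0 \<in> {0..D1}" "t0 \<in> {0..D2}" using t0_ge t0_le by auto
  have meet: "\<gamma> t0 = \<eta> t0"
  proof (rule ccontr)
    assume ne: "\<gamma> t0 \<noteq> \<eta> t0"
    define e where "e = d (\<gamma> t0) (\<eta> t0)"
    have "e > 0"
      using ne M.zero M.nonneg isometric_path_in[OF iso_\<gamma> t0_in(1)] isometric_path_in[OF iso_\<eta> t0_in(2)]
      unfolding e_def by (metis less_le)
    then obtain t where tA: "t \<in> A" and t: "t0 - e / 3 < t"
      using less_cSup_iff[OF _ bdd, of "t0 - e / 3"] \<open>0 \<in> A\<close> unfolding t0_def by auto
    have "t \<le> t0" using upper[OF tA] .
    have t_in: "t \<in> {0..D1}" "t \<in> {0..D2}" and "\<gamma> t = \<eta> t" using tA by (auto simp: A_def)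
    have "e \<le> d (\<gamma> t0) (\<gamma> t) + d (\<gamma> t) (\<eta> t0)"
      unfolding e_def using isometric_path_in[OF iso_\<gamma> t0_in(1)] isometric_path_in[OF iso_\<gamma> t_in(1)]
        isometric_path_in[OF iso_\<eta> t0_in(2)] by (rule M.triangle)
    also have "\<dots> = \<bar>t0 - t\<bar> + \<bar>t - t0\<bar>"
    proof -
      have "d (\<gamma> t0) (\<gamma> t) = \<bar>t0 - t\<bar>" using iso_\<gamma> t0_in t_in unfolding isometric_path_def by blast
      moreover have "d (\<eta> t) (\<eta> t0) = \<bar>t - t0\<bar>" using iso_\<eta> t0_in t_in unfolding isometric_path_def by blast
      ultimately show ?thesis using \<open>\<gamma> t = \<eta> t\<close> by simp
    qed
    finally show False using \<open>t \<le> t0\<close> t by simp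
  qed
  have beyond_t0: "s = t0 \<and> r = t0"
    if s: "s \<in> {t0..D1}" and r: "r \<in> {t0..D2}" and "\<gamma> s = \<eta> r" for s r
  proof -
    have "s = r" using dist_\<gamma>[of s] dist_\<eta>[of r] s r t0_ge \<open>\<gamma> s = \<eta> r\<close> by simp
    then have "s \<in> A" using s r t0_ge \<open>\<gamma> s = \<eta> r\<close> by (simp add: A_def)
    then show ?thesis using upper[of s] s \<open>s = r\<close> by simp
  qed
  define a where "a = D1 - t0"
  define b where "b = D2 - t0"
  define q where "q = path_join a (\<lambda>t. \<gamma> (D1 - t)) (\<lambda>t. \<eta> (t0 + t))"
  have a0: "0 \<le> a" and b0: "0 \<le> b" using t0_le by (simp_all add: a_def b_def)
  have iso1: "isometric_path S d a (\<lambda>t. \<gamma> (D1 - t))"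
    using isometric_path_restrict[OF isometric_path_reverse[OF iso_\<gamma>]] t0_ge by (simp add: a_def)
  have iso2: "isometric_path S d b (\<lambda>t. \<eta> (t0 + t))"
    using isometric_path_shift[OF iso_\<eta> t0_ge] by (simp add: b_def)
  have junction: "\<gamma> (D1 - a) = \<eta> (t0 + 0)" using meet by (simp add: a_def)
  have pieces: "q ` {0..a + b} \<subseteq> S"
    "\<And>s t. s \<in> {0..a + b} \<Longrightarrow> t \<in> {0..a + b} \<Longrightarrow> d (q s) (q t) \<le> 1 * \<bar>s - t\<bar>"
    unfolding q_def by (rule path_join_isometric_pieces[OF M iso1 iso2 a0 junction])+
  have q_ends: "q 0 = y" "q (a + b) = z"
    using path_join_endpoints[of a b "\<lambda>t. \<gamma> (D1 - t)" "\<lambda>t. \<eta> (t0 + t)", OF a0 b0 junction] ends b0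
    by (simp_all add: q_def a_def b_def)
  have dist_q: "d x (q t) = (if t \<le> a then D1 - t else t0 + (t - a))" if "t \<in> {0..a + b}" for t
    using that dist_\<gamma>[of "D1 - t"] dist_\<eta>[of "t0 + (t - a)"] t0_ge
    by (auto simp: q_def path_join_def a_def b_def)
  have inj: "inj_on q {0..a + b}"
  proof (rule inj_onI)
    fix s t assume s: "s \<in> {0..a + b}" and t: "t \<in> {0..a + b}" and eq: "q s = q t"
    have across: False if "u \<in> {0..a + b}" "u \<le> a" "v \<in> {0..a + b}" "\<not> v \<le> a" "q u = q v" for u v
      using beyond_t0[of "D1 - u" "t0 + (v - a)"] that by (auto simp: q_def path_join_def a_def b_def)
    have "d x (q s) = d x (q t)" using eq by simp
    then show "s = t"
      using dist_q[OF s] dist_q[OF t] across[OF s _ t _ eq] across[OF t _ s _ eq[symmetric]]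
      by (auto split: if_splits)
  qed
  have pos: "a + b > 0"
  proof (rule ccontr)
    assume "\<not> a + b > 0"
    then have "t0 = D1" "t0 = D2" using a0 b0 by (simp_all add: a_def b_def)
    then show False using False ends meet by simp
  qed
  have "q ` {0..a + b} = segment S d y z"
    by (rule R_tree_arc_image_eq_segment[OF R y z pos pieces(1) inj pieces(2) q_ends])
  moreover have "q a = \<gamma> t0" "a \<in> {0..a + b}" using a0 b0 by (simp_all add: q_def path_join_def a_def)
  ultimately have "\<gamma> t0 \<in> segment S d y z" by (metis imageI)
  moreover have "\<gamma> t0 \<in> segment S d x y" using \<gamma>_img t0_in(1) by (auto simp: D1_def)
  moreover have "\<gamma> t0 \<in> segment S d x z" using \<eta>_img t0_in(2) meet by (auto simp: D2_def)
  ultimately show thesis using that by blast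
qed

lemma segment_common_prefix:
  assumes R: "R_tree S d" and w: "w \<in> S" and y: "y \<in> S" and z: "z \<in> S"
    and c1: "c1 \<in> segment S d w y" and c2y: "c2 \<in> segment S d w y" and c2z: "c2 \<in> segment S d w z"
    and le: "d w c1 \<le> d w c2"
  shows "c1 \<in> segment S d w z"
proof -
  have M: "Metric_space S d" using R by (simp add: R_tree_def)
  have "c2 \<in> S" using c2y by (simp add: segment_def)
  then obtain p where p: "p \<in> segment S d w c2" "d w p = d w c1"
    using segment_point_at_dist[OF R w _ Metric_space.nonneg[OF M] le] by blast
  have "c1 = p"
    using segment_point_unique[OF R w y c1 segment_trans[OF M w y c2y p(1)]] p(2) by simp
  then show ?thesis using segment_trans[OF M w z c2z p(1)] by simp
qed

lemma R_tree_four_point: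
  assumes R: "R_tree S d" and w: "w \<in> S" and x: "x \<in> S" and y: "y \<in> S" and z: "z \<in> S"
  shows "d x z + d w y \<le> max (d x y + d w z) (d y z + d w x)"
proof -
  have M: "Metric_space S d" using R by (simp add: R_tree_def)
  interpret M: Metric_space S d by (rule M)
  obtain c1 where c1: "c1 \<in> segment S d w x" "c1 \<in> segment S d w y" "c1 \<in> segment S d x y"
    by (rule R_tree_tripod[OF R w x y])
  obtain c2 where c2: "c2 \<in> segment S d w y" "c2 \<in> segment S d w z" "c2 \<in> segment S d y z"
    by (rule R_tree_tripod[OF R w y z])
  have c1e: "c1 \<in> S" "d w c1 + d c1 x = d w x" "d w c1 + d c1 y = d w y" "d x c1 + d c1 y = d x y"
    using c1 by (auto simp: segment_def)
  have c2e: "c2 \<in> S" "d w c2 + d c2 y = d w y" "d w c2 + d c2 z = d w z" "d y c2 + d c2 z = d y z"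
    using c2 by (auto simp: segment_def)
  show ?thesis
  proof (cases "d w c1 \<le> d w c2")
    case True
    then have "c1 \<in> segment S d w z" by (rule segment_common_prefix[OF R w y z c1(2) c2(1) c2(2)])
    then have "d w c1 + d c1 z = d w z" by (simp add: segment_def)
    moreover have "d x z \<le> d x c1 + d c1 z" by (rule M.triangle[OF x c1e(1) z])
    ultimately show ?thesis using c1e M.commute[of c1 x] by simp
  next
    case False
    then have "c2 \<in> segment S d w x" by (intro segment_common_prefix[OF R w y x c2(1) c1(2) c1(1)]) simp
    then have "d w c2 + d c2 x = d w x" by (simp add: segment_def)
    moreover have "d x z \<le> d x c2 + d c2 z" by (rule M.triangle[OF x c2e(1) z])
    ultimately show ?thesis using c2e M.commute[of c2 x] M.commute[of c2 y] by simp
  qed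
qed

section \<open>Isometries of \<real>-trees\<close>

lemma affine_of_midpoint_recurrence:
  fixes f :: "nat \<Rightarrow> real"
  assumes grows: "f 1 < f 2"
    and rec: "\<And>j. j \<ge> 1 \<Longrightarrow> f 1 < f j \<Longrightarrow> f (j + 1) + f (j - 1) = 2 * f j"
    and "j \<ge> 1"
  shows "f j = real j * (f 2 - f 1) + (2 * f 1 - f 2)"
proof -
  define \<tau> where "\<tau> = f 2 - f 1"
  define c where "c = 2 * f 1 - f 2"
  have "\<tau> > 0" using grows by (simp add: \<tau>_def)
  have affine: "f (i + 1) = real (i + 1) * \<tau> + c \<and> f (i + 2) = real (i + 2) * \<tau> + c" for i
  proof (induction i)
    case 0
    show ?case by (simp add: \<tau>_def c_def numeral_2_eq_2)
  next
    case (Suc i)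
    then have prev: "f (i + 1) = real (i + 1) * \<tau> + c" and cur: "f (i + 2) = real (i + 2) * \<tau> + c"
      by auto
    have "1 * \<tau> < real (i + 2) * \<tau>" using \<open>\<tau> > 0\<close> by (intro mult_strict_right_mono) auto
    then have "f 1 < f (i + 2)" using cur by (simp add: \<tau>_def c_def)
    then have "f (i + 3) + f (i + 1) = 2 * f (i + 2)" using rec[of "i + 2"] by (simp add: numeral_3_eq_3)
    then have "f (Suc i + 2) = real (Suc i + 2) * \<tau> + c"
      using prev cur by (simp add: numeral_3_eq_3 algebra_simps)
    then show ?case using cur by simp
  qed
  show ?thesis using affine[of "j - 1"] \<open>j \<ge> 1\<close> by (simp add: \<tau>_def c_def)
qed

lemma isometric_actionD:
  assumes "isometric_action G S d act"
  shows "\<And>g x. g \<in> carrier G \<Longrightarrow> x \<in> S \<Longrightarrow> act g x \<in> S"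
    and "\<And>x. x \<in> S \<Longrightarrow> act \<one>\<^bsub>G\<^esub> x = x"
    and "\<And>g h x. g \<in> carrier G \<Longrightarrow> h \<in> carrier G \<Longrightarrow> x \<in> S \<Longrightarrow> act (g \<otimes>\<^bsub>G\<^esub> h) x = act g (act h x)"
    and "\<And>g x y. g \<in> carrier G \<Longrightarrow> x \<in> S \<Longrightarrow> y \<in> S \<Longrightarrow> d (act g x) (act g y) = d x y"
  using assms unfolding isometric_action_def by blast+

lemma displacement_le_fixed_point:
  assumes M: "Metric_space S d" and A: "isometric_action G S d act" and v: "v \<in> carrier G"
    and m: "m \<in> S" and y: "y \<in> S" and fixed: "act v m = m"
  shows "d y (act v y) \<le> 2 * d y m"
proof -
  have "d y (act v y) \<le> d y m + d m (act v y)"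
    using Metric_space.triangle[OF M y m isometric_actionD(1)[OF A v y]] .
  also have "d m (act v y) = d m y"
    using isometric_actionD(4)[OF A v m y] fixed by simp
  finally show ?thesis using Metric_space.commute[OF M, of m y] by simp
qed

text \<open>For the midpoint \<open>m\<close> of \<open>[y, w y]\<close>, the four-point condition on \<open>w y, y, w\<^sup>2 y, w m\<close> gives
  \<open>d y (w m) \<le> d y (w y) / 2\<close>, and then the one on \<open>w y, m, y, w m\<close> forces \<open>w m = m\<close>.\<close>

lemma R_tree_fixed_midpoint:
  assumes R: "R_tree S d" and A: "isometric_action G S d act" and w: "w \<in> carrier G"
    and y: "y \<in> S" and short: "d y (act w (act w y)) \<le> d y (act w y)"
  obtains m where "m \<in> S" "act w m = m" "2 * d y m = d y (act w y)"
proof -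
  have M: "Metric_space S d" using R by (simp add: R_tree_def)
  interpret M: Metric_space S d by (rule M)
  define w1 where "w1 = act w y"
  define w2 where "w2 = act w w1"
  define a where "a = d y w1"
  have w1: "w1 \<in> S" and w2: "w2 \<in> S"
    unfolding w1_def w2_def using isometric_actionD(1)[OF A w] y by blast+
  obtain m where m_seg: "m \<in> segment S d y w1" and ym: "d y m = a / 2"
    using segment_point_at_dist[OF R y w1, of "a / 2"] M.nonneg[of y w1] by (auto simp: a_def)
  have m: "m \<in> S" and mw1: "d m w1 = a / 2" using m_seg ym by (auto simp: segment_def a_def)
  define wm where "wm = act w m"
  have wm: "wm \<in> S" unfolding wm_def using isometric_actionD(1)[OF A w m] .
  have w1_wm: "d w1 wm = a / 2" and wm_w2: "d wm w2 = a / 2" and w1_w2: "d w1 w2 = a"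
    unfolding w1_def w2_def wm_def
    using isometric_actionD(4)[OF A w] y m w1 ym mw1 by (simp_all add: a_def w1_def)
  have "d y wm + d w1 w2 \<le> max (d y w2 + d w1 wm) (d w2 wm + d w1 y)"
    by (rule R_tree_four_point[OF R w1 y w2 wm])
  then have y_wm: "d y wm \<le> a / 2"
    using short w1_wm wm_w2 w1_w2 M.commute[of w2 wm] M.commute[of w1 y]
    by (simp add: a_def w1_def w2_def max_def split: if_splits)
  have "d m wm + d w1 y \<le> max (d m y + d w1 wm) (d y wm + d w1 m)"
    by (rule R_tree_four_point[OF R w1 m y wm])
  then have "d m wm \<le> 0"
    using y_wm ym mw1 w1_wm M.commute[of m y] M.commute[of w1 m] M.commute[of w1 y]
    by (simp add: a_def max_def split: if_splits)
  then have "d m wm = 0" using M.nonneg[of m wm] by linarith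
  then have "act w m = m" using M.zero[OF m wm] by (simp add: wm_def)
  then show thesis using that m ym by (simp add: a_def w1_def)
qed

context monoid
begin

lemma isometric_action_pow_add:
  assumes "isometric_action G S d act" and "w \<in> carrier G" and "y \<in> S"
  shows "act (w [^] (i + j :: nat)) y = act (w [^] i) (act (w [^] j) y)"
  using isometric_actionD(3)[OF assms(1) nat_pow_closed[OF assms(2)] nat_pow_closed[OF assms(2)] assms(3)]
  by (simp add: nat_pow_mult[OF assms(2)])

lemma isometric_action_pow_dist:
  assumes A: "isometric_action G S d act" and w: "w \<in> carrier G" and y: "y \<in> S" and "i \<le> j"
  shows "d (act (w [^] (i::nat)) y) (act (w [^] j) y) = d y (act (w [^] (j - i)) y)"
proof -
  have "act (w [^] j) y = act (w [^] i) (act (w [^] (j - i)) y)"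
    using isometric_action_pow_add[OF A w y, of i "j - i"] \<open>i \<le> j\<close> by simp
  then show ?thesis
    using isometric_actionD(4)[OF A nat_pow_closed[OF w] y isometric_actionD(1)[OF A nat_pow_closed[OF w] y]]
    by simp
qed

lemma isometric_action_pow_fixed:
  assumes A: "isometric_action G S d act" and u: "u \<in> carrier G" and m: "m \<in> S"
    and fixed: "act u m = m"
  shows "act (u [^] (n::nat)) m = m"
proof (induction n)
  case 0 then show ?case using isometric_actionD(2)[OF A m] by simp
next
  case (Suc n)
  then show ?case using isometric_actionD(3)[OF A nat_pow_closed[OF u] u m] fixed by simp
qed

lemma displacement_pow_le:
  assumes M: "Metric_space S d" and A: "isometric_action G S d act" and w: "w \<in> carrier G"
    and y: "y \<in> S"
  shows "d y (act (w [^] (n::nat)) y) \<le> real n * d y (act w y)"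
proof (induction n)
  case 0 then show ?case using isometric_actionD(2)[OF A y] Metric_space.zero[OF M y y] by simp
next
  case (Suc n)
  have "d y (act (w [^] Suc n) y) \<le> d y (act (w [^] n) y) + d (act (w [^] n) y) (act (w [^] Suc n) y)"
    using Metric_space.triangle[OF M y] isometric_actionD(1)[OF A nat_pow_closed[OF w] y] by blast
  also have "d (act (w [^] n) y) (act (w [^] Suc n) y) = d y (act w y)"
    using isometric_action_pow_dist[OF A w y, of n "Suc n"] w by simp
  finally show ?case using Suc by (simp add: algebra_simps)
qed

text \<open>With \<open>y\<^sub>n = w\<^sup>n y\<close> and \<open>f n = d y y\<^sub>n\<close>, the four-point condition on \<open>y\<^sub>0, y\<^sub>1, y\<^sub>j, y\<^sub>j\<^sub>+\<^sub>1\<close>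
  forces \<open>f (j+1) + f (j-1) = 2 f j\<close> as soon as \<open>f j > f 1\<close>.\<close>

lemma R_tree_orbit_recurrence:
  fixes j :: nat
  assumes R: "R_tree S d" and A: "isometric_action G S d act" and w: "w \<in> carrier G"
    and y: "y \<in> S" and "j \<ge> 1"
    and far: "d y (act w y) < d y (act (w [^] j) y)"
  shows "d y (act (w [^] (j + 1)) y) + d y (act (w [^] (j - 1)) y) = 2 * d y (act (w [^] j) y)"
proof -
  have M: "Metric_space S d" using R by (simp add: R_tree_def)
  interpret M: Metric_space S d by (rule M)
  define f where "f n = d y (act (w [^] n) y)" for n :: nat
  define Y where "Y n = act (w [^] n) y" for n :: nat
  have Y: "Y n \<in> S" for n unfolding Y_def using isometric_actionD(1)[OF A nat_pow_closed[OF w] y] .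
  have dY: "i \<le> n \<Longrightarrow> d (Y i) (Y n) = f (n - i)" for i n
    unfolding Y_def f_def by (rule isometric_action_pow_dist[OF A w y])
  have "Y 0 = y" using isometric_actionD(2)[OF A y] by (simp add: Y_def)
  then have e: "d (Y 0) (Y (j + 1)) = f (j + 1)" "d (Y 1) (Y j) = f (j - 1)" "d (Y 0) (Y j) = f j"
    "d (Y 1) (Y (j + 1)) = f j" "d (Y j) (Y (j + 1)) = f 1" "d (Y 1) (Y 0) = f 1"
    "d (Y (j + 1)) (Y j) = f 1"
    using dY[of 0 "j + 1"] dY[of 1 j] dY[of 0 j] dY[of 1 "j + 1"] dY[of j "j + 1"] dY[of 0 1]
      M.commute[of "Y 1" "Y 0"] M.commute[of "Y (j + 1)" "Y j"] Y \<open>j \<ge> 1\<close> by simp_all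
  have "d (Y 0) (Y (j + 1)) + d (Y 1) (Y j) \<le> max (d (Y 0) (Y j) + d (Y 1) (Y (j + 1))) (d (Y j) (Y (j + 1)) + d (Y 1) (Y 0))"
    and "d (Y 0) (Y j) + d (Y 1) (Y (j + 1)) \<le> max (d (Y 0) (Y (j + 1)) + d (Y 1) (Y j)) (d (Y (j + 1)) (Y j) + d (Y 1) (Y 0))"
    by (rule R_tree_four_point[OF R Y Y Y Y])+
  then have "f (j + 1) + f (j - 1) \<le> max (f j + f j) (f 1 + f 1)"
    and "f j + f j \<le> max (f (j + 1) + f (j - 1)) (f 1 + f 1)"
    unfolding e by simp_all
  moreover have "f 1 < f j" using far w by (simp add: f_def)
  ultimately show ?thesis by (simp add: f_def max_def split: if_splits)
qed

lemma R_tree_isometry_dichotomy: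
  assumes R: "R_tree S d" and A: "isometric_action G S d act" and w: "w \<in> carrier G"
    and y: "y \<in> S"
  obtains (elliptic) m where "m \<in> S" "act w m = m" "2 * d y m = d y (act w y)"
    | (hyperbolic) \<tau> c where "\<tau> > 0" "\<And>j. j \<ge> 1 \<Longrightarrow> d y (act (w [^] j) y) = real j * \<tau> + c"
proof (cases "d y (act w (act w y)) \<le> d y (act w y)")
  case True
  then show thesis using R_tree_fixed_midpoint[OF R A w y] elliptic by blast
next
  case False
  define f where "f n = d y (act (w [^] n) y)" for n :: nat
  have f12: "f 1 = d y (act w y)" "f 2 = d y (act w (act w y))"
    using w isometric_action_pow_add[OF A w y, of 1 1] by (simp_all add: f_def numeral_2_eq_2)
  have affine: "f j = real j * (f 2 - f 1) + (2 * f 1 - f 2)" if "j \<ge> 1" for j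
  proof (rule affine_of_midpoint_recurrence[OF _ _ that])
    show "f 1 < f 2" using False f12 by simp
    show "f (j + 1) + f (j - 1) = 2 * f j" if "j \<ge> 1" "f 1 < f j" for j
      using R_tree_orbit_recurrence[OF R A w y that(1)] that(2) f12(1) by (simp add: f_def)
  qed
  show thesis
  proof (rule hyperbolic)
    show "f 2 - f 1 > 0" using False f12 by simp
    show "d y (act (w [^] j) y) = real j * (f 2 - f 1) + (2 * f 1 - f 2)" if "j \<ge> 1" for j
      using affine[OF that] by (simp only: f_def)
  qed
qed

text \<open>If \<open>g\<^sup>k\<close> is hyperbolic it moves \<open>y\<close> at most as far as \<open>g\<^sup>k\<^sup>l = (g\<^sup>l)\<^sup>k\<close> does. If it is elliptic, so is
  \<open>g\<^sup>l\<close> (a hyperbolic \<open>g\<^sup>l\<close> would make the orbit of \<open>y\<close> under \<open>g\<^sup>k\<^sup>l\<close> unbounded), and the fixed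
  midpoint of \<open>[y, g\<^sup>l y]\<close> is fixed by \<open>g\<^sup>k\<close> as well.\<close>

lemma R_tree_tame_displacement_le:
  fixes k l :: nat
  assumes R: "R_tree S d" and A: "isometric_action G S d act" and g: "g \<in> carrier G"
    and "l \<ge> 1" and "k \<ge> 1" and y: "y \<in> S"
    and tame: "Fix S act (g [^] l) \<subseteq> Fix S act (g [^] k)"
  shows "d y (act (g [^] k) y) \<le> real k * d y (act (g [^] l) y)"
proof -
  have M: "Metric_space S d" using R by (simp add: R_tree_def)
  define h where "h = g [^] l"
  define u where "u = g [^] k"
  have h: "h \<in> carrier G" and u: "u \<in> carrier G" using g by (simp_all add: h_def u_def)
  have pow_swap: "h [^] (k * j) = u [^] (l * j)" for j
    using g by (simp add: h_def u_def nat_pow_pow mult.left_commute)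
  have h_bound: "d y (act (h [^] k) y) \<le> real k * d y (act h y)"
    by (rule displacement_pow_le[OF M A h y])
  show ?thesis
  proof (cases rule: R_tree_isometry_dichotomy[OF R A u y, case_names elliptic hyperbolic])
    case (hyperbolic \<tau> c)
    have "d y (act u y) = 1 * \<tau> + c" using hyperbolic(2)[of 1] u by simp
    also have "\<dots> \<le> real l * \<tau> + c" using \<open>l \<ge> 1\<close> \<open>\<tau> > 0\<close> by simp
    also have "\<dots> = d y (act (h [^] k) y)" using hyperbolic(2)[of l] pow_swap[of 1] \<open>l \<ge> 1\<close> by simp
    finally show ?thesis using h_bound by (simp add: h_def u_def)
  next
    case (elliptic m)
    have u_orbit_bounded: "d y (act (h [^] (k * j)) y) \<le> 2 * d y m" for j
      unfolding pow_swap
      using displacement_le_fixed_point[OF M A nat_pow_closed[OF u] elliptic(1) y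
          isometric_action_pow_fixed[OF A u elliptic(1,2)]] .
    obtain m' where "m' \<in> S" "act h m' = m'" "2 * d y m' = d y (act h y)"
    proof (cases rule: R_tree_isometry_dichotomy[OF R A h y, case_names elliptic hyperbolic])
      case (hyperbolic \<tau> c)
      obtain j where j: "2 * d y m - c < real j * \<tau>"
        using ex_less_of_nat_mult[OF \<open>\<tau> > 0\<close>] by blast
      have "Suc j \<le> k * Suc j" using \<open>k \<ge> 1\<close> by (metis mult_1 mult_le_mono1)
      then have "real (Suc j) \<le> real (k * Suc j)" by (simp only: of_nat_le_iff)
      then have "real (Suc j) * \<tau> \<le> real (k * Suc j) * \<tau>"
        using \<open>\<tau> > 0\<close> by (rule mult_right_mono[OF _ less_imp_le])
      then have "2 * d y m < d y (act (h [^] (k * Suc j)) y)"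
        using hyperbolic(2)[of "k * Suc j"] \<open>k \<ge> 1\<close> j \<open>\<tau> > 0\<close> by (simp add: algebra_simps)
      then show ?thesis using u_orbit_bounded[of "Suc j"] by simp
    qed (rule that)
    then have "act u m' = m'" using tame by (auto simp: Fix_def h_def u_def)
    then have "d y (act u y) \<le> d y (act h y)"
      using displacement_le_fixed_point[OF M A u \<open>m' \<in> S\<close> y] \<open>2 * d y m' = d y (act h y)\<close> by simp
    also have "\<dots> \<le> real k * d y (act h y)"
      using mult_right_mono[OF _ Metric_space.nonneg[OF M], of 1 "real k"] \<open>k \<ge> 1\<close> by simp
    finally show ?thesis by (simp add: h_def u_def)
  qed
qed

end

section \<open>Limits of tame trees\<close>

lemma eGH_converges_approximate:
  assumes conv: "eGH_converges G Sn dn actn S d act" and p: "p \<in> S"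
    and "finite P" and "P \<subseteq> carrier G" and "\<epsilon> > 0"
  obtains n q where "q \<in> Sn n"
    "\<And>g h. g \<in> P \<Longrightarrow> h \<in> P \<Longrightarrow> \<bar>d (act g p) (act h p) - dn n (actn n g q) (actn n h q)\<bar> < \<epsilon>"
proof -
  have "\<exists>n0. \<forall>n\<ge>n0. \<exists>Kn R. finite Kn \<and> Kn \<subseteq> Sn n \<and> R \<subseteq> {p} \<times> Kn \<and> fst ` R = {p} \<and>
      snd ` R = Kn \<and> (\<forall>(x, x')\<in>R. \<forall>(y, y')\<in>R. \<forall>g\<in>P. \<forall>h\<in>P.
        \<bar>d (act g x) (act h y) - dn n (actn n g x') (actn n h y')\<bar> < \<epsilon>)"
    by (rule conv[unfolded eGH_converges_def, rule_format]) (use p assms(3-5) in simp)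
  then obtain n0 where "\<forall>n\<ge>n0. \<exists>Kn R. finite Kn \<and> Kn \<subseteq> Sn n \<and> R \<subseteq> {p} \<times> Kn \<and> fst ` R = {p} \<and>
      snd ` R = Kn \<and> (\<forall>(x, x')\<in>R. \<forall>(y, y')\<in>R. \<forall>g\<in>P. \<forall>h\<in>P.
        \<bar>d (act g x) (act h y) - dn n (actn n g x') (actn n h y')\<bar> < \<epsilon>)" ..
  from this[rule_format, OF order_refl] obtain Kn R where Kn: "Kn \<subseteq> Sn n0"
    and R: "fst ` R = {p}" "snd ` R = Kn" and close: "\<forall>(x, x')\<in>R. \<forall>(y, y')\<in>R. \<forall>g\<in>P. \<forall>h\<in>P.
        \<bar>d (act g x) (act h y) - dn n0 (actn n0 g x') (actn n0 h y')\<bar> < \<epsilon>"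
    by (elim exE conjE) (rule that)
  obtain q where pq: "(p, q) \<in> R" using R(1) by (metis fst_conv imageE insertI1 prod.collapse)
  then have "q \<in> Sn n0" using R(2) Kn by force
  moreover have "\<forall>g\<in>P. \<forall>h\<in>P. \<bar>d (act g p) (act h p) - dn n0 (actn n0 g q) (actn n0 h q)\<bar> < \<epsilon>"
    using bspec[OF bspec[OF close pq, unfolded prod.case] pq] by (simp only: prod.case)
  ultimately show thesis using that by blast
qed

lemma (in monoid) eGH_limit_Fix_subset:
  assumes conv: "eGH_converges G Sn dn actn S d act"
    and M: "Metric_space S d" and A: "isometric_action G S d act"
    and An: "\<And>n. isometric_action G (Sn n) (dn n) (actn n)"
    and a: "a \<in> carrier G" and b: "b \<in> carrier G" and "C \<ge> 0"
    and bound: "\<And>n q. q \<in> Sn n \<Longrightarrow> dn n q (actn n b q) \<le> C * dn n q (actn n a q)"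
  shows "Fix S act a \<subseteq> Fix S act b"
proof
  fix p assume "p \<in> Fix S act a"
  then have p: "p \<in> S" and fixed: "act a p = p" by (auto simp: Fix_def)
  define \<delta> where "\<delta> = d p (act b p)"
  define \<epsilon> where "\<epsilon> = \<delta> / (C + 2)"
  show "p \<in> Fix S act b"
  proof (rule ccontr)
    assume "p \<notin> Fix S act b"
    then have "\<delta> > 0"
      using p Metric_space.nonneg[OF M] Metric_space.zero[OF M p isometric_actionD(1)[OF A b p]]
      by (auto simp: Fix_def \<delta>_def less_le)
    then have "\<epsilon> > 0" using \<open>C \<ge> 0\<close> by (simp add: \<epsilon>_def)
    obtain n q where q: "q \<in> Sn n" and close: "\<And>g h. g \<in> {\<one>, a, b} \<Longrightarrow> h \<in> {\<one>, a, b} \<Longrightarrow>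
        \<bar>d (act g p) (act h p) - dn n (actn n g q) (actn n h q)\<bar> < \<epsilon>"
      by (rule eGH_converges_approximate[OF conv p _ _ \<open>\<epsilon> > 0\<close>, where P = "{\<one>, a, b}"])
        (use a b in auto)
    have one: "act \<one> p = p" "actn n \<one> q = q"
      using isometric_actionD(2)[OF A p] isometric_actionD(2)[OF An q] by simp_all
    have "dn n q (actn n a q) < \<epsilon>" and "\<delta> - \<epsilon> < dn n q (actn n b q)"
      using close[of \<one> a] close[of \<one> b] one fixed Metric_space.zero[OF M p p] by (simp_all add: \<delta>_def)
    moreover have "C * dn n q (actn n a q) \<le> C * \<epsilon>"
      using calculation(1) \<open>C \<ge> 0\<close> by (simp add: mult_left_mono)
    ultimately have "\<delta> - \<epsilon> < C * \<epsilon>" using bound[OF q] by linarith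
    moreover have "C * \<epsilon> + 2 * \<epsilon> = \<delta>"
      using \<open>C \<ge> 0\<close> unfolding \<epsilon>_def by (simp add: add_divide_distrib[symmetric] distrib_right[symmetric])
    ultimately show False using \<open>\<epsilon> > 0\<close> by linarith
  qed
qed

theorem proposition6p4:
  fixes G :: "'g monoid" and Gs :: "nat \<Rightarrow> 'g set" and m N k :: nat and x :: "nat \<Rightarrow> 'g"
    and S :: "'a set" and d :: "'a \<Rightarrow> 'a \<Rightarrow> real" and act :: "'g \<Rightarrow> 'a \<Rightarrow> 'a"
    and Sn :: "nat \<Rightarrow> 'b set" and dn :: "nat \<Rightarrow> 'b \<Rightarrow> 'b \<Rightarrow> real" and actn :: "nat \<Rightarrow> 'g \<Rightarrow> 'b \<Rightarrow> 'b"
  assumes "free_product_decomp G Gs m x N"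
    and "countable (carrier G)"
    and "k \<ge> 1"
    and "small_minimal_GF_tree G Gs m S d act"
    and "\<forall>n. k_tame G Gs m k (Sn n) (dn n) (actn n)"
    and "eGH_converges G Sn dn actn S d act"
  shows "k_tame G Gs m k S d act"
proof -
  interpret G: group G using assms(1) by (simp add: free_product_decomp_def)
  have R: "R_tree S d" and A: "isometric_action G S d act"
    and Rn: "\<And>n. R_tree (Sn n) (dn n)" and An: "\<And>n. isometric_action G (Sn n) (dn n) (actn n)"
    using assms(4,5) by (simp_all add: k_tame_def small_minimal_GF_tree_def GF_tree_def)
  have "Fix S act (g [^]\<^bsub>G\<^esub> l) \<subseteq> Fix S act (g [^]\<^bsub>G\<^esub> k)"
    if g: "g \<in> carrier G" and "\<not> peripheral_elem G Gs m g" and "l \<ge> 1" for g and l :: nat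
  proof (rule G.eGH_limit_Fix_subset[OF assms(6) _ A An])
    show "dn n q (actn n (g [^]\<^bsub>G\<^esub> k) q) \<le> real k * dn n q (actn n (g [^]\<^bsub>G\<^esub> l) q)"
      if "q \<in> Sn n" for n q
      using G.R_tree_tame_displacement_le[OF Rn An g \<open>l \<ge> 1\<close> assms(3) that] assms(5) g
        \<open>\<not> peripheral_elem G Gs m g\<close> \<open>l \<ge> 1\<close> by (simp add: k_tame_def)
  qed (use R g in \<open>simp_all add: R_tree_def\<close>)
  then show ?thesis using assms(4) by (simp add: k_tame_def)
qed

end
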